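(* Let $M_m$ satisfy $G_m\ge0$. If $u,v\in M_m$ satisfy $0<r_u<r_v$ and $\gamma_u$ has finite turn angle, then $T_{\gamma_u}\le T_{\gamma_v}$, with equality if and only if $G_m$ vanishes on $[r_u,\infty)$.
   Context: For a smooth function $m\colon[0,\infty)\to[0,\infty)$ with $m(0)=0$, $m'(0)=1$, $m>0$ on $(0,\infty)$ and smooth odd extension, $M_m$ is $\mathbb R^2$ with metric $dr^2+m(r)^2d\theta^2$ (polar coordinates $(r,\theta)$ about origin $o$), curvature $G_m=-m''/m$. For $q\ne o$, $r_q$ is its $r$-coordinate and $\gamma_q\colon[0,\infty)\to M_m$ is the unit speed geodesic starting at $q$ in direction $\partial_\theta$. For a geodesic $\gamma$ on $[0,\infty)$ not passing through $o$, its turn angle is $T_\gamma=\int_0^\infty|\dot\theta_{\gamma(s)}|\,ds\in[0,\infty]$. *)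

theory Defs
  imports "HOL-Analysis.Analysis"
begin

definition smooth_fun :: "(real \<Rightarrow> real) \<Rightarrow> bool" where
  "smooth_fun f \<longleftrightarrow> (\<forall>k x. ((deriv ^^ k) f) differentiable (at x))"

text \<open>Admissible warping function m (given as its smooth odd extension to the real line).\<close>
definition admissible_m :: "(real \<Rightarrow> real) \<Rightarrow> bool" where
  "admissible_m m \<longleftrightarrow> smooth_fun m \<and> (\<forall>x. m (- x) = - m x) \<and>
     m 0 = 0 \<and> deriv m 0 = 1 \<and> (\<forall>r>0. m r > 0)"

definition Gm :: "(real \<Rightarrow> real) \<Rightarrow> real \<Rightarrow> real" where
  "Gm m r = - deriv (deriv m) r / m r"

text \<open>A unit speed geodesic on [0,oo) of the metric dr^2 + m(r)^2 dtheta^2, not passing through o,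
  written in polar coordinates (rho s, phi s) with phi a continuous lift of the angle.
  Geodesic equations (Christoffel symbols of the metric):
    rho'' = m(rho) m'(rho) phi'^2,   phi'' = - 2 m'(rho)/m(rho) rho' phi'.
  gamma_q: starts at q = (rq, thq) with unit velocity in direction d/dtheta,
  i.e. rho'(0) = 0, phi'(0) = 1 / m(rq).\<close>
definition gamma_polar ::
  "(real \<Rightarrow> real) \<Rightarrow> real \<Rightarrow> real \<Rightarrow> (real \<Rightarrow> real) \<Rightarrow> (real \<Rightarrow> real) \<Rightarrow> bool" where
  "gamma_polar m rq thq \<rho> \<phi> \<longleftrightarrow>
     (\<forall>s\<ge>0. \<rho> s > 0) \<and> \<rho> 0 = rq \<and> \<phi> 0 = thq \<and>
     (\<exists>\<rho>' \<phi>'. \<rho>' 0 = 0 \<and> \<phi>' 0 = 1 / m rq \<and>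
        (\<forall>s\<ge>0.
          (\<rho> has_real_derivative \<rho>' s) (at s within {0..}) \<and>
          (\<phi> has_real_derivative \<phi>' s) (at s within {0..}) \<and>
          (\<rho>' has_real_derivative (m (\<rho> s) * deriv m (\<rho> s) * (\<phi>' s)\<^sup>2)) (at s within {0..}) \<and>
          (\<phi>' has_real_derivative (- 2 * deriv m (\<rho> s) / m (\<rho> s) * \<rho>' s * \<phi>' s))
              (at s within {0..})))"

definition turn_angle :: "(real \<Rightarrow> real) \<Rightarrow> ennreal" where
  "turn_angle \<phi> = set_nn_integral lborel {0..} (\<lambda>s. ennreal \<bar>deriv \<phi> s\<bar>)"

end

theory Submission
  imports Defs
begin

(* Clairaut's relation m(rho)^2 phi' = m(r0) and the energy identity rho'^2 + m(rho)^2 phi'^2 = 1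
  allow the substitution w = m(rho)/m(r0) in the turn angle integral of the geodesic starting
  tangentially at radius r0; it becomes the integral over w > 1 of
  1 / (w sqrt(w^2 - 1) m'(m^-1(m(r0) w))).
  Nonnegative curvature means that m is concave, so m' is nonnegative and nonincreasing. If m were
  bounded, phi' would be bounded below and the turn angle infinite; hence m is unbounded, m' > 0 and
  m is invertible on [0, oo). As r0 grows, m^-1(m(r0) w) grows, so the integrand does not decrease,
  and it increases strictly on an interval of w exactly where m' strictly decreases, which happens
  beyond r_u unless the curvature vanishes on [r_u, oo). *)

lemma nn_integral_indicator_UN_incseq:
  fixes f :: "'a \<Rightarrow> ennreal"
  assumes A: "incseq A" and meas: "\<And>n. (\<lambda>x. f x * indicator (A n) x) \<in> borel_measurable M"
  shows "(\<integral>\<^sup>+x. f x * indicator (\<Union>n. A n) x \<partial>M) = (SUP n. \<integral>\<^sup>+x. f x * indicator (A n) x \<partial>M)"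
proof -
  have "f x * indicator (\<Union>n. A n) x = (SUP n. f x * indicator (A n) x)" for x
  proof (cases "x \<in> (\<Union>n. A n)")
    case True
    then obtain n where "x \<in> A n" by blast
    with True show ?thesis
      by (intro antisym SUP_upper2[of n] SUP_least) (auto simp: indicator_def)
  qed (auto simp: indicator_def)
  moreover have "incseq (\<lambda>n x. f x * indicator (A n) x)"
    using A by (auto simp: incseq_def le_fun_def indicator_def intro!: mult_left_mono)
  ultimately show ?thesis
    using nn_integral_monotone_convergence_SUP[OF _ meas] by (simp add: SUP_apply[symmetric])
qed

lemma UN_Icc_eq_Ioi:
  fixes l u :: "nat \<Rightarrow> real"
  assumes "\<And>n. a < l n" and "l \<longlonglongrightarrow> a" and "filterlim u at_top sequentially"
  shows "(\<Union>n. {l n..u n}) = {a<..}"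
proof (intro equalityI subsetI)
  fix x assume "x \<in> {a<..}"
  then have "\<forall>\<^sub>F n in sequentially. l n < x \<and> x \<le> u n"
    using assms(2,3) by (auto simp: filterlim_at_top intro!: eventually_conj order_tendstoD(2))
  then obtain n where "l n < x" "x \<le> u n" by (auto simp: eventually_sequentially)
  then have "x \<in> {l n..u n}" by simp
  then show "x \<in> (\<Union>n. {l n..u n})" by blast
qed (use assms(1) less_le_trans in fastforce)

lemma borel_measurable_compose_indicator:
  fixes f g h :: "real \<Rightarrow> real"
  assumes [measurable]: "f \<in> borel_measurable borel" "S \<in> sets borel"
    and "continuous_on S g" "continuous_on S h"
  shows "(\<lambda>x. ennreal (f (g x) * h x) * indicator S x) \<in> borel_measurable borel"
proof -
  have [measurable]: "(\<lambda>x. indicator S x * g x) \<in> borel_measurable borel"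
      "(\<lambda>x. indicator S x * h x) \<in> borel_measurable borel"
    using assms borel_measurable_continuous_on_indicator[of S g]
      borel_measurable_continuous_on_indicator[of S h] by simp_all
  have "(\<lambda>x. ennreal (f (g x) * h x) * indicator S x) =
      (\<lambda>x. ennreal (f (indicator S x * g x) * (indicator S x * h x)) * indicator S x)"
    by (auto simp: fun_eq_iff indicator_def)
  then show ?thesis by simp
qed

lemma nn_integral_substitution_Ioi:
  fixes f g g' :: "real \<Rightarrow> real" and a :: real
  assumes f: "f \<in> borel_measurable borel"
    and derivg: "\<And>x. x > 0 \<Longrightarrow> (g has_real_derivative g' x) (at x)"
    and contg': "continuous_on {0<..} g'"
    and derivg_nonneg: "\<And>x. x > 0 \<Longrightarrow> g' x \<ge> 0"
    and g_gt: "\<And>x. x > 0 \<Longrightarrow> a < g x"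
    and g_at_0: "(g \<longlongrightarrow> a) (at_right 0)"
    and g_at_top: "filterlim g at_top at_top"
  shows "(\<integral>\<^sup>+y. ennreal (f y) * indicator {a<..} y \<partial>lborel)
       = (\<integral>\<^sup>+x. ennreal (f (g x) * g' x) * indicator {0<..} x \<partial>lborel)"
proof -
  define l :: "nat \<Rightarrow> real" where "l = (\<lambda>n. inverse (Suc n))"
  define A where "A n = {l n..Suc n}" for n
  define B where "B n = {g (l n)..g (Suc n)}" for n
  have l_pos: "l n > 0" for n by (simp add: l_def)
  have l_le: "l n \<le> Suc n" for n by (simp add: l_def inverse_le_1_iff order_trans[of _ 1])
  have l_to_0: "filterlim l (at_right 0) sequentially"
    using LIMSEQ_inverse_real_of_nat by (simp add: filterlim_at l_def)
  have Suc_to_top: "filterlim (\<lambda>n. real (Suc n)) at_top sequentially"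
    by (rule filterlim_compose[OF filterlim_real_sequentially filterlim_Suc])
  have g_mono: "g x \<le> g y" if "0 < x" "x \<le> y" for x y
    using that by (intro deriv_nonneg_imp_mono[of x y g g'] derivg derivg_nonneg) auto
  have "incseq A" unfolding A_def l_def by (intro incseq_SucI) auto
  have "incseq B" unfolding B_def l_def by (intro incseq_SucI) (auto intro!: g_mono)
  have A_Un: "(\<Union>n. A n) = {0<..}"
    unfolding A_def using l_pos l_to_0 Suc_to_top by (intro UN_Icc_eq_Ioi) (auto simp: filterlim_at)
  have B_Un: "(\<Union>n. B n) = {a<..}"
    unfolding B_def using g_gt l_pos filterlim_compose[OF g_at_0 l_to_0]
      filterlim_compose[OF g_at_top Suc_to_top] by (intro UN_Icc_eq_Ioi) auto
  have "(\<integral>\<^sup>+y. ennreal (f y) * indicator (B n) y \<partial>lborel)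
      = (\<integral>\<^sup>+x. ennreal (f (g x) * g' x) * indicator (A n) x \<partial>lborel)" for n
    unfolding A_def B_def nn_integral_set_ennreal using l_pos[of n] l_le[of n] f
    by (intro nn_integral_substitution derivg derivg_nonneg continuous_on_subset[OF contg'])
       (auto simp: set_borel_measurable_def)
  moreover have "(\<lambda>x. ennreal (f (g x) * g' x) * indicator (A n) x) \<in> borel_measurable borel" for n
    unfolding A_def using f l_pos[of n]
    by (intro borel_measurable_compose_indicator has_real_derivative_imp_continuous_on[where f' = g']
        derivg continuous_on_subset[OF contg']) auto
  moreover have "(\<lambda>x. ennreal (f x) * indicator (B n) x) \<in> borel_measurable borel" for n
    using f by (simp add: B_def)
  ultimately show ?thesis
    using nn_integral_indicator_UN_incseq[where M=lborel, OF \<open>incseq A\<close>]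
      nn_integral_indicator_UN_incseq[where M=lborel, OF \<open>incseq B\<close>]
    by (simp add: A_Un B_Un)
qed

lemma emeasure_lborel_Ioi: "emeasure lborel {a<..} = (\<infinity> :: ennreal)" for a :: real
proof -
  have "of_nat n \<le> emeasure lborel {a<..}" for n
  proof -
    have "emeasure lborel {a<..<a + real n} \<le> emeasure lborel {a<..}"
      by (rule emeasure_mono) auto
    then show ?thesis by (simp add: ennreal_of_nat_eq_real_of_nat)
  qed
  then have "(SUP n. of_nat n :: ennreal) \<le> emeasure lborel {a<..}"
    by (intro SUP_least) auto
  then show ?thesis by (simp add: ennreal_SUP_of_nat_eq_top top_unique)
qed

lemma nn_integral_less_if_less_on_interval:
  fixes f g :: "real \<Rightarrow> ennreal"
  assumes [measurable]: "f \<in> borel_measurable borel" "g \<in> borel_measurable borel"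
    and finite: "(\<integral>\<^sup>+x. f x \<partial>lborel) \<noteq> \<infinity>" and le: "\<And>x. f x \<le> g x"
    and "a < b" and less: "\<And>x. a < x \<Longrightarrow> x < b \<Longrightarrow> f x < g x"
  shows "(\<integral>\<^sup>+x. f x \<partial>lborel) < (\<integral>\<^sup>+x. g x \<partial>lborel)"
proof (rule nn_integral_less)
  show "\<not> (AE x in lborel. g x \<le> f x)"
  proof
    assume "AE x in lborel. g x \<le> f x"
    then have "AE x in lborel. x \<notin> {a<..<b}"
      by eventually_elim (auto dest: less simp: not_less[symmetric])
    then have "emeasure lborel {a<..<b} = 0"
      by (subst (asm) AE_iff_measurable[of "{a<..<b}"]) auto
    with \<open>a < b\<close> show False by simp
  qed
qed (use finite le in auto)

lemma at_within_Ici_eq_at: "a < x \<Longrightarrow> at x within {a..} = at (x::real)"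
  by (rule at_within_interior) (simp add: interior_real_atLeast)

lemma continuous_on_Ici_if_derivative:
  assumes "\<And>x. a \<le> x \<Longrightarrow> (f has_real_derivative f' x) (at x within {a..})"
  shows "continuous_on {a..} f"
  using assms by (auto simp: continuous_on_eq_continuous_within intro: DERIV_continuous)

lemma mono_on_Ici_if_derivative_nonneg:
  assumes deriv: "\<And>x. a \<le> x \<Longrightarrow> (f has_real_derivative f' x) (at x within {a..})"
    and nonneg: "\<And>x. a < x \<Longrightarrow> f' x \<ge> 0" and "a \<le> x" "x \<le> y"
  shows "f x \<le> f (y::real)"
proof (rule DERIV_nonneg_imp_increasing_open[OF \<open>x \<le> y\<close>])
  show "continuous_on {x..y} f"
    using continuous_on_Ici_if_derivative[OF deriv] by (rule continuous_on_subset) (use assms in auto)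
  fix z assume "x < z" "z < y"
  with assms have "a < z" by simp
  then show "\<exists>y. (f has_real_derivative y) (at z) \<and> 0 \<le> y"
    using deriv[of z] nonneg[of z] at_within_Ici_eq_at[of a z] by auto
qed

lemma constant_on_Ici_if_derivative_0:
  assumes "\<And>x. a \<le> x \<Longrightarrow> (f has_real_derivative 0) (at x within {a..})" and "a \<le> x"
  shows "f x = f (a::real)"
  using has_field_derivative_zero_constant[of "{a..}" f] assms by auto

locale nonneg_curvature =
  fixes m :: "real \<Rightarrow> real"
  assumes admissible: "admissible_m m" and curvature_nonneg: "\<forall>r>0. Gm m r \<ge> 0"
begin

lemma m_0: "m 0 = 0" and m_pos: "r > 0 \<Longrightarrow> m r > 0"
  using admissible by (auto simp: admissible_m_def)

lemma differentiable_deriv_m: "((deriv ^^ k) m) differentiable (at x)"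
  using admissible by (auto simp: admissible_m_def smooth_fun_def)

lemma has_real_derivative_m: "(m has_real_derivative deriv m x) (at x)"
  using differentiable_deriv_m[of 0 x] by (simp add: DERIV_deriv_iff_real_differentiable)

lemma has_real_derivative_deriv_m: "(deriv m has_real_derivative deriv (deriv m) x) (at x)"
  using differentiable_deriv_m[of 1 x] by (simp add: DERIV_deriv_iff_real_differentiable)

lemma isCont_deriv2_m: "isCont (deriv (deriv m)) x"
  using differentiable_deriv_m[of 2 x] by (simp add: differentiable_imp_continuous_within numeral_2_eq_2)

lemma continuous_on_m: "continuous_on S m"
  by (intro continuous_at_imp_continuous_on ballI DERIV_isCont[OF has_real_derivative_m])

lemma continuous_on_deriv_m: "continuous_on S (deriv m)"
  by (intro continuous_at_imp_continuous_on ballI DERIV_isCont[OF has_real_derivative_deriv_m])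

lemma deriv2_m_nonpos: "r > 0 \<Longrightarrow> deriv (deriv m) r \<le> 0"
  using curvature_nonneg m_pos[of r] by (auto simp: Gm_def divide_le_0_iff)

lemma deriv_m_antimono: assumes "0 \<le> x" "x \<le> y" shows "deriv m y \<le> deriv m x"
  using assms by (intro DERIV_nonpos_imp_decreasing_open[OF \<open>x \<le> y\<close>] continuous_on_deriv_m)
     (auto intro!: exI[of _ "deriv (deriv m) _"] has_real_derivative_deriv_m deriv2_m_nonpos)

text \<open>A negative slope would persist by concavity and drive \<open>m\<close> below zero.\<close>
lemma deriv_m_nonneg: assumes r: "r \<ge> 0" shows "deriv m r \<ge> 0"
proof (rule ccontr)
  assume "\<not> ?thesis"
  then have neg: "deriv m r < 0" by simp
  define x where "x = r + m r / (- deriv m r) + 1"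
  have "m r \<ge> 0" using m_pos[of r] r m_0 by (cases "r = 0") auto
  then have "m r / (- deriv m r) \<ge> 0" using neg by (intro divide_nonneg_pos) auto
  then have rx: "r + 1 \<le> x" by (simp add: x_def)
  then have rx': "r \<le> x" by simp
  have "m x - deriv m r * x \<le> m r - deriv m r * r"
    using rx r
    by (intro DERIV_nonpos_imp_decreasing_open[OF rx'] continuous_intros continuous_on_m)
       (auto intro!: exI[of _ "deriv m _ - deriv m r"] derivative_eq_intros has_real_derivative_m
         deriv_m_antimono)
  then have "m x \<le> m r + deriv m r * (x - r)" by (simp add: algebra_simps)
  also have "\<dots> = deriv m r" using neg by (simp add: x_def field_simps)
  finally have "m x < 0" using neg by simp
  then show False using m_pos[of x] rx r by simp
qed

lemma m_mono: assumes "0 \<le> x" "x \<le> y" shows "m x \<le> m y"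
  using assms by (intro DERIV_nonneg_imp_increasing_open[OF \<open>x \<le> y\<close>] continuous_on_m)
     (auto intro!: exI[of _ "deriv m _"] has_real_derivative_m deriv_m_nonneg)

lemma m_nonneg: "r \<ge> 0 \<Longrightarrow> m r \<ge> 0"
  using m_mono[of 0 r] m_0 by simp

lemma deriv_m_eq_if_flat:
  assumes "0 < r1" and flat: "\<forall>r\<ge>r1. Gm m r = 0" and "r1 \<le> r"
  shows "deriv m r = deriv m r1"
proof (cases "r = r1")
  case False
  with \<open>r1 \<le> r\<close> have "r1 < r" by simp
  then show ?thesis
  proof (rule DERIV_isconst_end[OF _ continuous_on_deriv_m])
    fix x assume "r1 < x" "x < r"
    then have "deriv (deriv m) x = 0"
      using flat[rule_format, of x] m_pos[of x] \<open>0 < r1\<close> by (auto simp: Gm_def)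
    then show "(deriv m has_real_derivative 0) (at x)" using has_real_derivative_deriv_m[of x] by simp
  qed
qed simp

lemma deriv_m_strict_antimono_if_curved:
  assumes r: "r > 0" and curved: "Gm m r \<noteq> 0"
  obtains e where "e > 0" and "\<And>x y. r \<le> x \<Longrightarrow> x < r + e \<Longrightarrow> x < y \<Longrightarrow> deriv m y < deriv m x"
proof -
  have neg: "deriv (deriv m) r < 0"
    using curved deriv2_m_nonpos[OF r] m_pos[OF r] by (auto simp: Gm_def)
  obtain d where "d > 0" and d_close: "\<And>x. x \<noteq> r \<Longrightarrow> norm (x - r) < d \<Longrightarrow>
      norm (deriv (deriv m) x - deriv (deriv m) r) < - deriv (deriv m) r"
    using LIM_D[OF isCont_deriv2_m[of r, unfolded isCont_def], of "- deriv (deriv m) r"] neg by auto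
  have d: "deriv (deriv m) x < 0" if "\<bar>x - r\<bar> < d" for x
    using d_close[of x] that neg by (cases "x = r") auto
  have "deriv m y < deriv m x" if "r \<le> x" "x < r + d / 2" "x < y" for x y
  proof -
    define y' where "y' = min y (r + d / 2)"
    have "deriv m y' < deriv m x"
    proof (rule DERIV_neg_imp_decreasing_open[OF _ _ continuous_on_deriv_m])
      show "x < y'" using that by (simp add: y'_def)
      fix z assume "x < z" "z < y'"
      then have "\<bar>z - r\<bar> < d" using that \<open>d > 0\<close> by (simp add: y'_def)
      then show "\<exists>y. (deriv m has_real_derivative y) (at z) \<and> y < 0"
        using has_real_derivative_deriv_m d by blast
    qed
    moreover have "deriv m y \<le> deriv m y'"
      using deriv_m_antimono[of y' y] that r \<open>d > 0\<close> by (simp add: y'_def)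
    ultimately show ?thesis by simp
  qed
  then show ?thesis using that[of "d / 2"] \<open>d > 0\<close> by simp
qed

end

locale geodesic = nonneg_curvature +
  fixes r0 :: real and \<rho> \<phi> \<rho>' \<phi>' :: "real \<Rightarrow> real"
  assumes r0_pos: "0 < r0" and rho_pos: "\<And>s. s \<ge> 0 \<Longrightarrow> \<rho> s > 0" and rho_0: "\<rho> 0 = r0"
    and rho'_0: "\<rho>' 0 = 0" and phi'_0: "\<phi>' 0 = 1 / m r0"
    and has_derivative_rho: "\<And>s. s \<ge> 0 \<Longrightarrow> (\<rho> has_real_derivative \<rho>' s) (at s within {0..})"
    and has_derivative_phi: "\<And>s. s \<ge> 0 \<Longrightarrow> (\<phi> has_real_derivative \<phi>' s) (at s within {0..})"
    and has_derivative_rho': "\<And>s. s \<ge> 0 \<Longrightarrow>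
      (\<rho>' has_real_derivative (m (\<rho> s) * deriv m (\<rho> s) * (\<phi>' s)\<^sup>2)) (at s within {0..})"
    and has_derivative_phi': "\<And>s. s \<ge> 0 \<Longrightarrow>
      (\<phi>' has_real_derivative (- 2 * deriv m (\<rho> s) / m (\<rho> s) * \<rho>' s * \<phi>' s)) (at s within {0..})"
begin

lemma m_rho_pos: "s \<ge> 0 \<Longrightarrow> m (\<rho> s) > 0"
  using m_pos rho_pos by blast

lemma has_derivative_m_rho:
  "s \<ge> 0 \<Longrightarrow> ((\<lambda>s. m (\<rho> s)) has_real_derivative deriv m (\<rho> s) * \<rho>' s) (at s within {0..})"
  by (rule DERIV_chain2[OF has_real_derivative_m has_derivative_rho])

lemma clairaut: assumes "s \<ge> 0" shows "m (\<rho> s) ^ 2 * \<phi>' s = m r0"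
proof -
  have "((\<lambda>s. m (\<rho> s) ^ 2 * \<phi>' s) has_real_derivative 0) (at s within {0..})" if "s \<ge> 0" for s
    using m_rho_pos[OF that]
    by (auto intro!: derivative_eq_intros has_derivative_m_rho has_derivative_phi' that
        simp: field_simps power2_eq_square)
  from constant_on_Ici_if_derivative_0[OF this assms] show ?thesis
    using rho_0 phi'_0 m_pos[OF r0_pos] by (simp add: power2_eq_square)
qed

lemma energy: assumes "s \<ge> 0" shows "(\<rho>' s)\<^sup>2 + m (\<rho> s) ^ 2 * (\<phi>' s)\<^sup>2 = 1"
proof -
  have "((\<lambda>s. (\<rho>' s)\<^sup>2 + m (\<rho> s) ^ 2 * (\<phi>' s)\<^sup>2) has_real_derivative 0) (at s within {0..})"
    if "s \<ge> 0" for s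
    using m_rho_pos[OF that]
    by (auto intro!: derivative_eq_intros has_derivative_m_rho has_derivative_phi' has_derivative_rho'
        that simp: field_simps power2_eq_square)
  from constant_on_Ici_if_derivative_0[OF this assms] show ?thesis
    using rho_0 rho'_0 phi'_0 m_pos[OF r0_pos] by (simp add: power2_eq_square)
qed

lemma phi'_eq: "s \<ge> 0 \<Longrightarrow> \<phi>' s = m r0 / m (\<rho> s) ^ 2"
  using clairaut[of s] m_rho_pos[of s] by (simp add: field_simps)

lemma phi'_pos: "s \<ge> 0 \<Longrightarrow> \<phi>' s > 0"
  using phi'_eq[of s] m_rho_pos[of s] m_pos[OF r0_pos] by simp

lemma rho'_squared: "s \<ge> 0 \<Longrightarrow> (\<rho>' s)\<^sup>2 = 1 - (m r0)\<^sup>2 / m (\<rho> s) ^ 2"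
  using energy[of s] phi'_eq[of s] m_rho_pos[of s] by (simp add: field_simps power2_eq_square)

lemma rho''_nonneg: "s \<ge> 0 \<Longrightarrow> m (\<rho> s) * deriv m (\<rho> s) * (\<phi>' s)\<^sup>2 \<ge> 0"
  using m_rho_pos[of s] deriv_m_nonneg[of "\<rho> s"] rho_pos[of s] by simp

lemma rho'_mono: "0 \<le> x \<Longrightarrow> x \<le> y \<Longrightarrow> \<rho>' x \<le> \<rho>' y"
  by (rule mono_on_Ici_if_derivative_nonneg[OF has_derivative_rho']) (auto intro: rho''_nonneg)

lemma rho'_nonneg: "s \<ge> 0 \<Longrightarrow> \<rho>' s \<ge> 0"
  using rho'_mono[of 0 s] rho'_0 by simp

lemma rho_mono: "0 \<le> x \<Longrightarrow> x \<le> y \<Longrightarrow> \<rho> x \<le> \<rho> y"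
  by (rule mono_on_Ici_if_derivative_nonneg[OF has_derivative_rho]) (auto intro: rho'_nonneg)

lemma turn_angle_eq_integral_phi':
  "turn_angle \<phi> = (\<integral>\<^sup>+s. ennreal (\<phi>' s) * indicator {0<..} s \<partial>lborel)"
  unfolding turn_angle_def
proof (rule nn_integral_cong_AE)
  have "ennreal \<bar>deriv \<phi> s\<bar> * indicator {0..} s = ennreal (\<phi>' s) * indicator {0<..} s"
    if "s \<noteq> 0" for s
  proof (cases "s > 0")
    case True
    then have "deriv \<phi> s = \<phi>' s"
      using has_derivative_phi[of s] at_within_Ici_eq_at[of 0 s] by (simp add: DERIV_imp_deriv)
    with True phi'_pos[of s] show ?thesis by simp
  qed (use that in simp)
  then show "AE s in lborel. ennreal \<bar>deriv \<phi> s\<bar> * indicator {0..} s = ennreal (\<phi>' s) * indicator {0<..} s"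
    using AE_lborel_singleton[of 0] by (auto elim: AE_mp)
qed

lemma turn_angle_infinite_if_m_bounded:
  assumes bounded: "\<And>r. r \<ge> 0 \<Longrightarrow> m r \<le> M"
  shows "turn_angle \<phi> = \<infinity>"
proof -
  define c where "c = m r0 / M\<^sup>2"
  have "M > 0" using bounded[of r0] m_pos[OF r0_pos] r0_pos by simp
  then have "c > 0" using m_pos[OF r0_pos] by (simp add: c_def)
  have lower_bound: "ennreal c * indicator {0<..} s \<le> ennreal (\<phi>' s) * indicator {0<..} s"
    for s :: real
  proof (cases "s > 0")
    case True
    then have "m (\<rho> s) ^ 2 \<le> M\<^sup>2"
      using bounded[of "\<rho> s"] m_rho_pos[of s] rho_pos[of s] by (intro power_mono) auto
    then have "c \<le> \<phi>' s"
      using True phi'_eq[of s] m_pos[OF r0_pos] m_rho_pos[of s] \<open>M > 0\<close>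
      by (auto simp: c_def intro!: divide_left_mono)
    then show ?thesis using True by (simp add: ennreal_leI)
  qed simp
  have "(\<integral>\<^sup>+s. ennreal c * indicator {0::real<..} s \<partial>lborel) \<le> turn_angle \<phi>"
    unfolding turn_angle_eq_integral_phi' by (intro nn_integral_mono lower_bound)
  then show ?thesis
    using \<open>c > 0\<close> by (simp add: nn_integral_cmult_indicator emeasure_lborel_Ioi ennreal_mult_top top_unique)
qed

end

locale unbounded_nonneg_curvature = nonneg_curvature +
  assumes unbounded: "\<And>M. \<exists>r\<ge>0. M < m r"
begin

lemma deriv_m_pos: assumes "r \<ge> 0" shows "deriv m r > 0"
proof (rule ccontr)
  assume "\<not> ?thesis"
  then have "deriv m r = 0" using deriv_m_nonneg[OF assms] by simp
  then have "deriv m x = 0" if "x \<ge> r" for x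
    using deriv_m_antimono[OF assms that] deriv_m_nonneg[of x] that assms by simp
  then have flat: "(m has_real_derivative 0) (at x)" if "x \<ge> r" for x
    using has_real_derivative_m[of x] that by simp
  have "m y \<le> m r" if "y \<ge> 0" for y
  proof (cases "y \<le> r")
    case False
    then show ?thesis
      by (intro DERIV_nonpos_imp_decreasing_open[of r y] continuous_on_m) (auto intro!: exI[of _ 0] flat)
  qed (use m_mono that in simp)
  then show False using unbounded[of "m r"] by force
qed

lemma m_strict_mono: assumes "0 \<le> x" "x < y" shows "m x < m y"
  using assms by (intro DERIV_pos_imp_increasing[OF \<open>x < y\<close>])
    (auto intro!: exI[of _ "deriv m _"] has_real_derivative_m deriv_m_pos)

lemma m_surj_on: assumes "y \<ge> 0" shows "\<exists>r\<ge>0. m r = y"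
proof -
  obtain R where "R \<ge> 0" "y < m R" using unbounded by blast
  then have "\<exists>r. 0 \<le> r \<and> r \<le> R \<and> m r = y"
    using assms m_0 by (intro IVT' continuous_on_m) auto
  then show ?thesis by auto
qed

text \<open>Negative arguments are mapped to themselves only to make \<open>m_inv\<close> monotone, hence Borel
  measurable, on the whole real line.\<close>
definition m_inv :: "real \<Rightarrow> real" where
  "m_inv y = (if y < 0 then y else (THE r. 0 \<le> r \<and> m r = y))"

lemma m_inv: assumes "y \<ge> 0" shows "m_inv y \<ge> 0" and "m (m_inv y) = y"
proof -
  have "\<exists>!r. 0 \<le> r \<and> m r = y"
  proof -
    obtain r where r: "r \<ge> 0" "m r = y" using m_surj_on[OF assms] by blast
    moreover have "r' = r" if "0 \<le> r'" "m r' = y" for r'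
      using m_strict_mono[of r r'] m_strict_mono[of r' r] that r by (cases r r' rule: linorder_cases) auto
    ultimately show ?thesis by blast
  qed
  then have "0 \<le> (THE r. 0 \<le> r \<and> m r = y) \<and> m (THE r. 0 \<le> r \<and> m r = y) = y"
    by (rule theI')
  then show "m_inv y \<ge> 0" "m (m_inv y) = y" using assms by (auto simp: m_inv_def)
qed

lemma m_inv_m: assumes "r \<ge> 0" shows "m_inv (m r) = r"
  using m_inv[OF m_nonneg[OF assms]] m_strict_mono[of r "m_inv (m r)"] m_strict_mono[of "m_inv (m r)" r] assms
  by (cases "r < m_inv (m r)"; cases "m_inv (m r) < r") auto

lemma m_inv_strict_mono: assumes "0 \<le> x" "x < y" shows "m_inv x < m_inv y"
proof (rule ccontr)
  assume "\<not> ?thesis"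
  then have "m (m_inv y) \<le> m (m_inv x)" using m_inv[of y] assms by (intro m_mono) auto
  then show False using m_inv[of x] m_inv[of y] assms by simp
qed

lemma mono_m_inv: "mono m_inv"
proof
  fix x y :: real assume "x \<le> y"
  then show "m_inv x \<le> m_inv y"
    using m_inv[of y] m_inv_strict_mono[of x y] by (cases "x < 0"; cases "x = y") (auto simp: m_inv_def)
qed

lemma m_inv_ge: assumes "0 \<le> r" "m r \<le> y" shows "r \<le> m_inv y"
  using monoD[OF mono_m_inv assms(2)] m_inv_m[OF assms(1)] by simp

text \<open>With the Clairaut constant \<open>c = m r0\<close>, the substitution \<open>w = m(\<rho>) / c\<close> turns
  \<open>\<phi>' = c / m(\<rho>)\<^sup>2\<close> into this integrand, because \<open>\<rho>' = c sqrt(w\<^sup>2 - 1) / m(\<rho>)\<close>.\<close>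
definition turn_integrand :: "real \<Rightarrow> real \<Rightarrow> real" where
  "turn_integrand c w = 1 / (w * sqrt (w\<^sup>2 - 1) * deriv m (m_inv (c * w)))"

definition turn_integral :: "real \<Rightarrow> ennreal" where
  "turn_integral c = (\<integral>\<^sup>+w. ennreal (turn_integrand c w) * indicator {1<..} w \<partial>lborel)"

lemma borel_measurable_turn_integrand [measurable]: "turn_integrand c \<in> borel_measurable borel"
proof -
  have [measurable]: "m_inv \<in> borel_measurable borel" "deriv m \<in> borel_measurable borel"
    by (simp_all add: borel_measurable_mono[OF mono_m_inv] borel_measurable_continuous_onI[OF continuous_on_deriv_m])
  show ?thesis unfolding turn_integrand_def[abs_def] by measurable
qed

lemma turn_integrand_compare:
  assumes "0 < c1" "0 < c2" "1 < w"
  shows "turn_integrand c1 w \<le> turn_integrand c2 w \<longleftrightarrow> deriv m (m_inv (c2 * w)) \<le> deriv m (m_inv (c1 * w))"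
    and "turn_integrand c1 w < turn_integrand c2 w \<longleftrightarrow> deriv m (m_inv (c2 * w)) < deriv m (m_inv (c1 * w))"
    and "turn_integrand c1 w > 0"
proof -
  define K where "K = w * sqrt (w\<^sup>2 - 1)"
  have K: "K > 0" using assms by (simp add: K_def power_strict_mono[of 1 w 2, simplified])
  have "deriv m (m_inv (c1 * w)) > 0" "deriv m (m_inv (c2 * w)) > 0"
    using assms m_inv(1)[of "c1 * w"] m_inv(1)[of "c2 * w"] by (auto intro!: deriv_m_pos)
  with K show "turn_integrand c1 w \<le> turn_integrand c2 w \<longleftrightarrow> deriv m (m_inv (c2 * w)) \<le> deriv m (m_inv (c1 * w))"
    and "turn_integrand c1 w < turn_integrand c2 w \<longleftrightarrow> deriv m (m_inv (c2 * w)) < deriv m (m_inv (c1 * w))"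
    and "turn_integrand c1 w > 0"
    unfolding turn_integrand_def K_def[symmetric]
    by (simp_all add: divide_simps mult_le_cancel_left_pos mult_less_cancel_left_pos)
qed

lemma turn_integrand_mono:
  assumes "0 < c1" "c1 \<le> c2" "1 < w"
  shows "turn_integrand c1 w \<le> turn_integrand c2 w"
proof -
  have "m_inv (c1 * w) \<le> m_inv (c2 * w)" using assms by (intro monoD[OF mono_m_inv]) simp
  then have "deriv m (m_inv (c2 * w)) \<le> deriv m (m_inv (c1 * w))"
    using m_inv(1)[of "c1 * w"] assms by (intro deriv_m_antimono) auto
  then show ?thesis using turn_integrand_compare(1)[of c1 c2 w] assms by simp
qed

lemma turn_integral_mono: assumes "0 < c1" "c1 \<le> c2" shows "turn_integral c1 \<le> turn_integral c2"
  unfolding turn_integral_def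
  by (intro nn_integral_mono) (auto simp: indicator_def intro: ennreal_leI turn_integrand_mono assms)

lemma turn_integral_eq_if_flat:
  assumes "0 < r1" "r1 \<le> r2" and flat: "\<forall>r\<ge>r1. Gm m r = 0"
  shows "turn_integral (m r1) = turn_integral (m r2)"
proof -
  have flat_integrand: "deriv m (m_inv (c * w)) = deriv m r1" if "m r1 \<le> c" "1 < w" for c w
  proof -
    have "0 < c" using that m_pos[OF \<open>0 < r1\<close>] by simp
    then have "c \<le> c * w" using \<open>1 < w\<close> by simp
    then have "r1 \<le> m_inv (c * w)" using \<open>0 < r1\<close> that(1) by (intro m_inv_ge) auto
    then show ?thesis using deriv_m_eq_if_flat[OF \<open>0 < r1\<close> flat] by blast
  qed
  have "turn_integrand (m r1) w = turn_integrand (m r2) w" if "1 < w" for w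
    using flat_integrand[OF order_refl that] flat_integrand[OF m_mono[of r1 r2] that] assms
    by (simp add: turn_integrand_def)
  then show ?thesis unfolding turn_integral_def by (intro nn_integral_cong) (simp add: indicator_def)
qed

lemma turn_integral_less_if_curved:
  assumes "0 < r1" "r1 < r2" and finite: "turn_integral (m r1) \<noteq> \<infinity>"
    and "r1 \<le> r" and curved: "Gm m r \<noteq> 0"
  shows "turn_integral (m r1) < turn_integral (m r2)"
proof -
  have "r > 0" using assms by simp
  obtain e where "e > 0" and strict: "\<And>x y. r \<le> x \<Longrightarrow> x < r + e \<Longrightarrow> x < y \<Longrightarrow> deriv m y < deriv m x"
    using deriv_m_strict_antimono_if_curved[OF \<open>r > 0\<close> curved] by blast
  define c1 c2 where "c1 = m r1" and "c2 = m r2"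
  have "0 < c1" "c1 < c2" using m_pos m_strict_mono assms by (auto simp: c1_def c2_def)
  have "c1 \<le> m r" using m_mono assms by (simp add: c1_def)
  have "ennreal (turn_integrand c1 w) * indicator {1<..} w < ennreal (turn_integrand c2 w) * indicator {1<..} w"
    if w: "m r / c1 < w" "w < m (r + e) / c1" for w
  proof -
    have c1w: "m r < c1 * w" "c1 * w < m (r + e)" using w \<open>0 < c1\<close> by (simp_all add: field_simps)
    have "c1 * 1 < c1 * w" using c1w(1) \<open>c1 \<le> m r\<close> by simp
    then have "1 < w" using \<open>0 < c1\<close> by (simp only: mult_less_cancel_left_pos)
    have "r < m_inv (c1 * w)" "m_inv (c1 * w) < r + e"
      using m_inv_strict_mono[OF _ c1w(1)] m_inv_strict_mono[OF _ c1w(2)] m_inv_m[of r] m_inv_m[of "r + e"]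
        m_nonneg[of r] \<open>r > 0\<close> \<open>e > 0\<close> \<open>0 < c1\<close> \<open>1 < w\<close> by auto
    moreover have "m_inv (c1 * w) < m_inv (c2 * w)"
      using \<open>0 < c1\<close> \<open>c1 < c2\<close> \<open>1 < w\<close> by (intro m_inv_strict_mono) auto
    ultimately have "turn_integrand c1 w < turn_integrand c2 w"
      using strict turn_integrand_compare(2)[of c1 c2 w] \<open>0 < c1\<close> \<open>c1 < c2\<close> \<open>1 < w\<close> by simp
    then show ?thesis
      using turn_integrand_compare(3)[of c1 c2 w] \<open>0 < c1\<close> \<open>c1 < c2\<close> \<open>1 < w\<close>
      by (simp add: ennreal_less_iff)
  qed
  moreover have "m r / c1 < m (r + e) / c1"
    using m_strict_mono[of r "r + e"] \<open>r > 0\<close> \<open>e > 0\<close> \<open>0 < c1\<close> by (simp add: divide_strict_right_mono)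
  moreover have "ennreal (turn_integrand c1 w) * indicator {1<..} w
      \<le> ennreal (turn_integrand c2 w) * indicator {1<..} w" for w
    using turn_integrand_mono[of c1 c2 w] \<open>0 < c1\<close> \<open>c1 < c2\<close> by (simp add: indicator_def ennreal_leI)
  ultimately show ?thesis
    using finite unfolding turn_integral_def c1_def[symmetric] c2_def[symmetric]
    by (intro nn_integral_less_if_less_on_interval[of _ _ "m r / c1" "m (r + e) / c1"]) auto
qed

end

locale unbounded_geodesic = geodesic + unbounded_nonneg_curvature
begin

lemma rho'_pos: assumes "s > 0" shows "\<rho>' s > 0"
proof -
  have "\<rho>' 0 < \<rho>' s"
  proof (rule DERIV_pos_imp_increasing_open[OF assms])
    fix x assume x: "0 < x" "x < s"
    have "m (\<rho> x) * deriv m (\<rho> x) * (\<phi>' x)\<^sup>2 > 0"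
      using m_rho_pos[of x] deriv_m_pos[of "\<rho> x"] rho_pos[of x] phi'_pos[of x] x by simp
    then show "\<exists>y. (\<rho>' has_real_derivative y) (at x) \<and> y > 0"
      using has_derivative_rho'[of x] at_within_Ici_eq_at[of 0 x] x by auto
  next
    show "continuous_on {0..s} \<rho>'"
      using continuous_on_Ici_if_derivative[OF has_derivative_rho'] by (rule continuous_on_subset) auto
  qed
  then show ?thesis using rho'_0 by simp
qed

lemma rho_strict_mono: assumes "0 \<le> x" "x < y" shows "\<rho> x < \<rho> y"
proof (rule DERIV_pos_imp_increasing_open[OF \<open>x < y\<close>])
  fix z assume "x < z" "z < y"
  then show "\<exists>y. (\<rho> has_real_derivative y) (at z) \<and> y > 0"
    using has_derivative_rho[of z] at_within_Ici_eq_at[of 0 z] rho'_pos[of z] assms by auto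
next
  show "continuous_on {x..y} \<rho>"
    using continuous_on_Ici_if_derivative[OF has_derivative_rho] by (rule continuous_on_subset) (use assms in auto)
qed

lemma rho_unbounded: "\<exists>s\<ge>0. R \<le> \<rho> s"
proof -
  have slope: "\<rho>' 1 > 0" using rho'_pos[of 1] by simp
  have linear: "\<rho> 1 + \<rho>' 1 * (s - 1) \<le> \<rho> s" if "1 \<le> s" for s
  proof -
    have "\<rho> 1 - \<rho>' 1 * 1 \<le> \<rho> s - \<rho>' 1 * s"
    proof (rule mono_on_Ici_if_derivative_nonneg[where a = 1 and f = "\<lambda>x. \<rho> x - \<rho>' 1 * x"
          and f' = "\<lambda>x. \<rho>' x - \<rho>' 1"])
      fix x :: real assume "1 \<le> x"
      then show "((\<lambda>x. \<rho> x - \<rho>' 1 * x) has_real_derivative \<rho>' x - \<rho>' 1) (at x within {1..})"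
        using has_derivative_rho[of x]
        by (auto intro!: derivative_eq_intros intro: has_field_derivative_subset)
    qed (use rho'_mono that in auto)
    then show ?thesis by (simp add: algebra_simps)
  qed
  define s where "s = max 1 (1 + (R - \<rho> 1) / \<rho>' 1)"
  have "R - \<rho> 1 \<le> \<rho>' 1 * (s - 1)"
    using slope by (simp add: s_def field_simps max_def)
  then show ?thesis using linear[of s] by (intro exI[of _ s]) (auto simp: s_def)
qed

lemma filterlim_m_rho_ratio_at_top: "filterlim (\<lambda>s. m (\<rho> s) / m r0) at_top at_top"
  unfolding filterlim_at_top eventually_at_top_linorder
proof
  fix Z
  obtain R where "R \<ge> 0" "Z * m r0 < m R" using unbounded by blast
  obtain s0 where "s0 \<ge> 0" "R \<le> \<rho> s0" using rho_unbounded by blast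
  have "Z \<le> m (\<rho> s) / m r0" if "s \<ge> s0" for s
  proof -
    have "m R \<le> m (\<rho> s)" using \<open>R \<ge> 0\<close> \<open>R \<le> \<rho> s0\<close> rho_mono[of s0 s] \<open>s0 \<ge> 0\<close> that by (intro m_mono) auto
    then show ?thesis using \<open>Z * m r0 < m R\<close> m_pos[OF r0_pos] by (simp add: field_simps)
  qed
  then show "\<exists>N. \<forall>s\<ge>N. Z \<le> m (\<rho> s) / m r0" by blast
qed

lemma phi'_eq_turn_integrand:
  assumes "s > 0"
  shows "turn_integrand (m r0) (m (\<rho> s) / m r0) * (deriv m (\<rho> s) * \<rho>' s / m r0) = \<phi>' s"
proof -
  define c M w where "c = m r0" and "M = m (\<rho> s)" and "w = M / c"
  have "c > 0" using m_pos[OF r0_pos] by (simp add: c_def)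
  have "c < M"
    using m_strict_mono[of r0 "\<rho> s"] rho_strict_mono[of 0 s] rho_0 r0_pos assms by (simp add: c_def M_def)
  then have "1 < w" using \<open>c > 0\<close> by (simp add: w_def)
  have inv: "m_inv (c * w) = \<rho> s"
    using m_inv_m[of "\<rho> s"] rho_pos[of s] assms \<open>c > 0\<close> by (simp add: w_def M_def)
  define S where "S = sqrt (w\<^sup>2 - 1)"
  have "S > 0" "S\<^sup>2 = w\<^sup>2 - 1"
    using \<open>1 < w\<close> by (simp_all add: S_def power_strict_mono[of 1 w 2, simplified] less_imp_le)
  then have "(\<rho>' s)\<^sup>2 = (c * S / M)\<^sup>2"
    using rho'_squared[of s] \<open>c > 0\<close> \<open>c < M\<close> assms
    by (simp add: c_def[symmetric] M_def[symmetric] w_def power_divide field_simps)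
  then have rho': "\<rho>' s = c * S / M"
    using rho'_nonneg[of s] \<open>S > 0\<close> \<open>c > 0\<close> \<open>c < M\<close> assms by (subst (asm) power2_eq_iff_nonneg) auto
  have "deriv m (\<rho> s) > 0" using deriv_m_pos rho_pos[of s] assms by simp
  have "turn_integrand c w = 1 / (w * S * deriv m (\<rho> s))"
    by (simp add: turn_integrand_def inv S_def)
  then have "turn_integrand c w * (deriv m (\<rho> s) * \<rho>' s / c) = c / M\<^sup>2"
    using \<open>deriv m (\<rho> s) > 0\<close> \<open>S > 0\<close> \<open>c > 0\<close> \<open>c < M\<close>
    by (simp add: rho' w_def field_simps power2_eq_square)
  also have "\<dots> = \<phi>' s" using phi'_eq[of s] assms by (simp add: c_def M_def)
  finally show ?thesis by (simp add: c_def M_def w_def)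
qed

lemma turn_angle_eq_turn_integral: "turn_angle \<phi> = turn_integral (m r0)"
proof -
  define g g' where "g s = m (\<rho> s) / m r0" and "g' s = deriv m (\<rho> s) * \<rho>' s / m r0" for s
  have "m r0 > 0" using m_pos[OF r0_pos] .
  have g_within: "(g has_real_derivative g' s) (at s within {0..})" if "s \<ge> 0" for s
    unfolding g_def[abs_def] g'_def by (rule DERIV_cdivide[OF has_derivative_m_rho[OF that]])
  have g_deriv: "(g has_real_derivative g' s) (at s)" if "s > 0" for s
    using g_within[of s] at_within_Ici_eq_at[of 0 s] that by simp
  have "continuous_on {0..} g'"
    unfolding g'_def[abs_def] using \<open>m r0 > 0\<close>
    by (intro continuous_intros continuous_on_compose2[OF continuous_on_deriv_m]
        continuous_on_Ici_if_derivative[OF has_derivative_rho] continuous_on_Ici_if_derivative[OF has_derivative_rho'])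
       auto
  then have g'_cont: "continuous_on {0<..} g'" by (rule continuous_on_subset) auto
  have "(g \<longlongrightarrow> g 0) (at 0 within {0..})"
    using continuous_on_Ici_if_derivative[OF g_within] by (simp add: continuous_on_def)
  moreover have "g 0 = 1" using \<open>m r0 > 0\<close> rho_0 by (simp add: g_def)
  ultimately have g_at_0: "(g \<longlongrightarrow> 1) (at_right 0)" by (auto intro: tendsto_within_subset)
  have g_at_top: "filterlim g at_top at_top"
    using filterlim_m_rho_ratio_at_top by (simp add: g_def[abs_def])
  have g_gt_1: "1 < g s" if "s > 0" for s
    using m_strict_mono[of r0 "\<rho> s"] rho_strict_mono[of 0 s] rho_0 r0_pos \<open>m r0 > 0\<close> that by (simp add: g_def)
  have g'_nonneg: "0 \<le> g' s" if "s > 0" for s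
    using deriv_m_pos[of "\<rho> s"] rho_pos[of s] rho'_nonneg[of s] \<open>m r0 > 0\<close> that by (simp add: g'_def)
  have "turn_integral (m r0)
      = (\<integral>\<^sup>+s. ennreal (turn_integrand (m r0) (g s) * g' s) * indicator {0<..} s \<partial>lborel)"
    unfolding turn_integral_def
    by (rule nn_integral_substitution_Ioi[OF borel_measurable_turn_integrand g_deriv g'_cont g'_nonneg
          g_gt_1 g_at_0 g_at_top])
  also have "\<dots> = turn_angle \<phi>"
    using phi'_eq_turn_integrand unfolding turn_angle_eq_integral_phi' g_def g'_def
    by (intro nn_integral_cong) (simp add: indicator_def)
  finally show ?thesis ..
qed

end

lemma (in nonneg_curvature) geodesic_if_gamma_polar:
  assumes "gamma_polar m r0 \<theta>0 \<rho> \<phi>" and "0 < r0"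
  obtains \<rho>' \<phi>' where "geodesic m r0 \<rho> \<phi> \<rho>' \<phi>'"
  using assms nonneg_curvature_axioms unfolding gamma_polar_def geodesic_def geodesic_axioms_def by blast

lemma (in nonneg_curvature) m_unbounded_if_turn_angle_finite:
  assumes "gamma_polar m r0 \<theta>0 \<rho> \<phi>" and "0 < r0" and "turn_angle \<phi> < \<infinity>"
  shows "\<exists>r\<ge>0. M < m r"
proof (rule ccontr)
  assume "\<not> (\<exists>r\<ge>0. M < m r)"
  moreover obtain \<rho>' \<phi>' where "geodesic m r0 \<rho> \<phi> \<rho>' \<phi>'"
    using geodesic_if_gamma_polar assms(1,2) by blast
  ultimately have "turn_angle \<phi> = \<infinity>"
    using geodesic.turn_angle_infinite_if_m_bounded[of m r0 \<rho> \<phi> \<rho>' \<phi>' M] by force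
  with assms(3) show False by simp
qed

lemma (in unbounded_nonneg_curvature) turn_angle_eq_turn_integral_if_gamma_polar:
  assumes "gamma_polar m r0 \<theta>0 \<rho> \<phi>" and "0 < r0"
  shows "turn_angle \<phi> = turn_integral (m r0)"
proof -
  obtain \<rho>' \<phi>' where "geodesic m r0 \<rho> \<phi> \<rho>' \<phi>'" using geodesic_if_gamma_polar[OF assms] .
  then interpret unbounded_geodesic m r0 \<rho> \<phi> \<rho>' \<phi>'
    by (intro_locales; simp add: geodesic_def unbounded_nonneg_curvature_axioms_def unbounded)
  show ?thesis by (rule turn_angle_eq_turn_integral)
qed

theorem proposition4p1:
  fixes m :: "real \<Rightarrow> real" and ru rv thu thv :: real
    and \<rho>u \<phi>u \<rho>v \<phi>v :: "real \<Rightarrow> real"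
  assumes "admissible_m m"
    and "\<forall>r>0. Gm m r \<ge> 0"
    and "0 < ru" and "ru < rv"
    and "gamma_polar m ru thu \<rho>u \<phi>u"
    and "gamma_polar m rv thv \<rho>v \<phi>v"
    and "turn_angle \<phi>u < \<infinity>"
  shows "turn_angle \<phi>u \<le> turn_angle \<phi>v \<and>
         (turn_angle \<phi>u = turn_angle \<phi>v \<longleftrightarrow> (\<forall>r\<ge>ru. Gm m r = 0))"
proof -
  interpret nonneg_curvature m using assms(1,2) by unfold_locales
  have "\<exists>r\<ge>0. M < m r" for M
    using m_unbounded_if_turn_angle_finite assms(3,5,7) by blast
  then interpret unbounded_nonneg_curvature m by unfold_locales
  have Tu: "turn_angle \<phi>u = turn_integral (m ru)"
    and Tv: "turn_angle \<phi>v = turn_integral (m rv)"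
    using turn_angle_eq_turn_integral_if_gamma_polar assms(3-6) by auto
  have "turn_integral (m ru) \<le> turn_integral (m rv)"
    using turn_integral_mono m_pos m_mono assms(3,4) by simp
  moreover have "turn_integral (m ru) \<noteq> turn_integral (m rv)" if "ru \<le> r" "Gm m r \<noteq> 0" for r
    using turn_integral_less_if_curved[OF assms(3,4) _ that] assms(7) Tu by force
  moreover have "(\<forall>r\<ge>ru. Gm m r = 0) \<Longrightarrow> turn_integral (m ru) = turn_integral (m rv)"
    using turn_integral_eq_if_flat assms(3,4) by simp
  ultimately show ?thesis unfolding Tu Tv by blast
qed

end
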